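(* Let $u,v,w$ be words of length $N$. For an oriented TFPL $f$ with boundary $(u,v;w)$, let $M_o(f)$ be the set of edges of $f$ oriented from an odd vertex to an even vertex, and $M_e(f)$ the set of edges of $f$ oriented from an even vertex to an odd vertex. Then $f\mapsto (M_o(f),M_e(f))$ is a bijection between the set of oriented TFPLs with boundary $(u,v;w)$ and the set of ordered pairs $(M_o,M_e)$ where $M_o$ is a perfect matching of $G^N_o(u,w)$, $M_e$ is a perfect matching of $G^N_e(v,w)$, and $M_o$ and $M_e$ are disjoint as sets of edges of $G^N$.
   Context: Let $N\ge 1$. $G^N$ is the induced subgraph of the square lattice $\mathbb{Z}^2$ formed by $N$ consecutive, horizontally centred rows having $3,5,\dots,2N+1$ vertices from top to bottom. It is bipartite; vertices of the same colour as the leftmost vertex of each row are called odd, the others even. Let $B_1,\dots,B_N$ be the even vertices of the bottom row, $L_1,\dots,L_N$ the leftmost vertices of the rows, and $R_1,\dots,R_N$ the rightmost vertices of the rows, each family numbered from left to right (so $L_1$ is the leftmost vertex of the bottom row and $R_1$ the rightmost vertex of the top row). A TFPL of size $N$ is a subgraph $f$ of $G^N$ (a set of edges) such that each $L_i$ and each $R_i$ has degree $0$ or $1$, each $B_i$ has degree $1$, every other vertex has degree $2$, and no path of $f$ joins two vertices $L_i,L_j$ or two vertices $R_i,R_j$. An oriented TFPL is a TFPL together with an orientation of each of its edges such that every vertex of degree $2$ has one incoming and one outgoing edge, the edges at the $L_i$ are oriented away from $L_i$, and the edges at the $R_i$ are oriented into $R_i$. For words $u,v,w\in\{0,1\}^N$,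 an oriented TFPL has boundary $(u,v;w)$ if for all $i$: $u_i=1$ iff $L_i$ has degree $1$; $v_i=0$ iff $R_i$ has degree $1$; $w_i=1$ if $B_i$ has in-degree $1$ and $w_i=0$ if $B_i$ has out-degree $1$. $G^N_o(u,w)$ is the induced subgraph of $G^N$ obtained by deleting all $R_i$, all $B_i$ with $w_i=0$, and all $L_i$ with $u_i=0$. $G^N_e(v,w)$ is the induced subgraph of $G^N$ obtained by deleting all $L_i$, all $B_i$ with $w_i=1$, and all $R_i$ with $v_i=1$. *)

theory Defs
  imports Main
begin

(* Coordinates: vertex (x,y) :: int * int, row y = 1..N counted from the top,
   row y consists of the vertices x = -y..y (2y+1 vertices, horizontally centred). *)

type_synonym vert = "int \<times> int"
type_synonym edge = "vert set"

definition GV :: "nat \<Rightarrow> vert set" where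
  "GV N = {(x, y). 1 \<le> y \<and> y \<le> int N \<and> \<bar>x\<bar> \<le> y}"

definition lattice_adj :: "vert \<Rightarrow> vert \<Rightarrow> bool" where
  "lattice_adj p q \<longleftrightarrow> \<bar>fst p - fst q\<bar> + \<bar>snd p - snd q\<bar> = 1"

definition GE :: "nat \<Rightarrow> edge set" where
  "GE N = {{p, q} | p q. p \<in> GV N \<and> q \<in> GV N \<and> lattice_adj p q}"

(* "odd" vertices: same colour as the leftmost vertex (-y,y) of each row *)
definition odd_vertex :: "vert \<Rightarrow> bool" where
  "odd_vertex p \<longleftrightarrow> even (fst p + snd p)"

definition even_vertex :: "vert \<Rightarrow> bool" where
  "even_vertex p \<longleftrightarrow> odd (fst p + snd p)"

(* L_i: leftmost vertices, numbered left to right (L_1 leftmost of bottom row) *)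
definition Lv :: "nat \<Rightarrow> nat \<Rightarrow> vert" where
  "Lv N i = (- int (N + 1 - i), int (N + 1 - i))"

(* R_i: rightmost vertices, numbered left to right (R_1 rightmost of top row) *)
definition Rv :: "nat \<Rightarrow> vert" where
  "Rv i = (int i, int i)"

(* B_i: even vertices of the bottom row, numbered left to right *)
definition Bv :: "nat \<Rightarrow> nat \<Rightarrow> vert" where
  "Bv N i = (2 * int i - 1 - int N, int N)"

(* letter i (1-based) of a word *)
definition letter :: "nat list \<Rightarrow> nat \<Rightarrow> nat" where
  "letter u i = u ! (i - 1)"

definition is_word :: "nat \<Rightarrow> nat list \<Rightarrow> bool" where
  "is_word N u \<longleftrightarrow> length u = N \<and> set u \<subseteq> {0, 1}"

definition deg :: "edge set \<Rightarrow> vert \<Rightarrow> nat" where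
  "deg f p = card {e \<in> f. p \<in> e}"

definition joined :: "edge set \<Rightarrow> vert \<Rightarrow> vert \<Rightarrow> bool" where
  "joined f p q \<longleftrightarrow> (p, q) \<in> {(a, b). {a, b} \<in> f}\<^sup>*"

definition is_TFPL :: "nat \<Rightarrow> edge set \<Rightarrow> bool" where
  "is_TFPL N f \<longleftrightarrow>
     f \<subseteq> GE N \<and>
     (\<forall>i\<in>{1..N}. deg f (Lv N i) \<le> 1 \<and> deg f (Rv i) \<le> 1 \<and> deg f (Bv N i) = 1) \<and>
     (\<forall>p\<in>GV N. p \<notin> Lv N ` {1..N} \<union> Rv ` {1..N} \<union> Bv N ` {1..N} \<longrightarrow> deg f p = 2) \<and>
     (\<forall>i\<in>{1..N}. \<forall>j\<in>{1..N}. i \<noteq> j \<longrightarrow>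
        \<not> joined f (Lv N i) (Lv N j) \<and> \<not> joined f (Rv i) (Rv j))"

(* An oriented TFPL is represented by its set D of oriented edges (arcs);
   the underlying TFPL is the set of unoriented edges of D. *)
definition und :: "(vert \<times> vert) set \<Rightarrow> edge set" where
  "und D = {{a, b} | a b. (a, b) \<in> D}"

definition indeg :: "(vert \<times> vert) set \<Rightarrow> vert \<Rightarrow> nat" where
  "indeg D p = card {q. (q, p) \<in> D}"

definition outdeg :: "(vert \<times> vert) set \<Rightarrow> vert \<Rightarrow> nat" where
  "outdeg D p = card {q. (p, q) \<in> D}"

definition is_oriented_TFPL :: "nat \<Rightarrow> (vert \<times> vert) set \<Rightarrow> bool" where
  "is_oriented_TFPL N D \<longleftrightarrow>
     (\<forall>a b. (a, b) \<in> D \<longrightarrow> {a, b} \<in> GE N \<and> (b, a) \<notin> D) \<and>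
     is_TFPL N (und D) \<and>
     (\<forall>p\<in>GV N. deg (und D) p = 2 \<longrightarrow> indeg D p = 1 \<and> outdeg D p = 1) \<and>
     (\<forall>i\<in>{1..N}. indeg D (Lv N i) = 0 \<and> outdeg D (Rv i) = 0)"

definition has_boundary ::
    "nat \<Rightarrow> nat list \<Rightarrow> nat list \<Rightarrow> nat list \<Rightarrow> (vert \<times> vert) set \<Rightarrow> bool" where
  "has_boundary N u v w D \<longleftrightarrow>
     (\<forall>i\<in>{1..N}.
        (letter u i = 1 \<longleftrightarrow> deg (und D) (Lv N i) = 1) \<and>
        (letter v i = 0 \<longleftrightarrow> deg (und D) (Rv i) = 1) \<and>
        (letter w i = 1 \<longrightarrow> indeg D (Bv N i) = 1) \<and>
        (letter w i = 0 \<longrightarrow> outdeg D (Bv N i) = 1))"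

definition induced_edges :: "nat \<Rightarrow> vert set \<Rightarrow> edge set" where
  "induced_edges N W = {e \<in> GE N. e \<subseteq> W}"

definition perfect_matching :: "nat \<Rightarrow> vert set \<Rightarrow> edge set \<Rightarrow> bool" where
  "perfect_matching N W M \<longleftrightarrow>
     M \<subseteq> induced_edges N W \<and> (\<forall>p\<in>W. \<exists>!e. e \<in> M \<and> p \<in> e)"

definition GoV :: "nat \<Rightarrow> nat list \<Rightarrow> nat list \<Rightarrow> vert set" where
  "GoV N u w = GV N - Rv ` {1..N} - Bv N ` {i \<in> {1..N}. letter w i = 0}
                    - (\<lambda>i. Lv N i) ` {i \<in> {1..N}. letter u i = 0}"

definition GeV :: "nat \<Rightarrow> nat list \<Rightarrow> nat list \<Rightarrow> vert set" where
  "GeV N v w = GV N - (\<lambda>i. Lv N i) ` {1..N} - Bv N ` {i \<in> {1..N}. letter w i = 1}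
                    - Rv ` {i \<in> {1..N}. letter v i = 1}"

definition Mo :: "(vert \<times> vert) set \<Rightarrow> edge set" where
  "Mo D = {{a, b} | a b. (a, b) \<in> D \<and> odd_vertex a \<and> even_vertex b}"

definition Me :: "(vert \<times> vert) set \<Rightarrow> edge set" where
  "Me D = {{a, b} | a b. (a, b) \<in> D \<and> even_vertex a \<and> odd_vertex b}"

end

theory Submission
  imports Defs
begin

text \<open>Every edge of an oriented subgraph of \<open>G\<^sup>N\<close> runs either from odd to even or from even
  to odd, so an orientation is the same thing as a pair of disjoint edge sets \<open>(M\<^sub>o, M\<^sub>e)\<close>. In an oriented TFPL with boundary \<open>(u,v;w)\<close> each
  vertex of \<open>G\<^sup>N\<^sub>o(u,w)\<close> carries exactly one \<open>M\<^sub>o\<close>-edge (its outgoing arc if odd, its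
  incoming arc if even) and every other vertex none, and likewise for \<open>G\<^sup>N\<^sub>e(v,w)\<close> and \<open>M\<^sub>e\<close>:
  the words \<open>u, v, w\<close> record exactly which of the \<open>L\<^sub>i, R\<^sub>i, B\<^sub>i\<close> belong to these graphs.
  Conversely these degree conditions give every vertex in- and out-degree at most one; the
  \<open>L\<^sub>i\<close> are then sources and the \<open>R\<^sub>i\<close> sinks, and a path between two sources (or two sinks)
  would force a vertex with two incoming (or two outgoing) arcs.\<close>

(* Vertices are integer pairs; keep the simplifier from splitting them into coordinates. *)
declare split_paired_All [simp del] split_paired_Ex [simp del]

section \<open>The graph \<open>G\<^sup>N\<close>\<close>

lemma even_vertex_iff_not_odd: "even_vertex p \<longleftrightarrow> \<not> odd_vertex p"
  by (simp add: odd_vertex_def even_vertex_def)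

lemma lattice_adj_parity:
  assumes "lattice_adj p q"
  shows "odd_vertex p \<longleftrightarrow> even_vertex q"
proof -
  obtain a b c d where pq: "p = (a, b)" "q = (c, d)" by (cases p, cases q) auto
  have "\<bar>a - c\<bar> + \<bar>b - d\<bar> = 1" using assms pq by (simp add: lattice_adj_def)
  then have "(a - c = 0 \<and> (b - d = 1 \<or> b - d = -1)) \<or> (b - d = 0 \<and> (a - c = 1 \<or> a - c = -1))"
    by arith
  then have "even (a + b) \<longleftrightarrow> odd (c + d)" by presburger
  then show ?thesis using pq by (simp add: odd_vertex_def even_vertex_def)
qed

lemma doubleton_in_GE:
  assumes "{a, b} \<in> GE N"
  shows "a \<in> GV N" "b \<in> GV N" "odd_vertex a \<longleftrightarrow> even_vertex b"
proof -
  obtain p q where "{a, b} = {p, q}" "p \<in> GV N" "q \<in> GV N" "lattice_adj p q"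
    using assms by (auto simp: GE_def)
  moreover have "lattice_adj q p" using \<open>lattice_adj p q\<close> by (simp add: lattice_adj_def abs_minus_commute)
  ultimately show "a \<in> GV N" "b \<in> GV N" "odd_vertex a \<longleftrightarrow> even_vertex b"
    by (auto simp: doubleton_eq_iff dest: lattice_adj_parity)
qed

lemma GE_doubleton: "e \<in> GE N \<Longrightarrow> \<exists>a b. e = {a, b}"
  by (auto simp: GE_def)

lemma finite_GV: "finite (GV N)"
proof -
  have "GV N \<subseteq> {-int N..int N} \<times> {1..int N}" by (auto simp: GV_def)
  then show ?thesis by (rule finite_subset) simp
qed

lemma finite_GE: "finite (GE N)"
proof -
  have "GE N \<subseteq> Pow (GV N)" by (auto simp: GE_def)
  then show ?thesis using finite_GV finite_subset by blast
qed

lemma Lv_in_GV: "i \<in> {1..N} \<Longrightarrow> Lv N i \<in> GV N" by (auto simp: Lv_def GV_def)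
lemma Rv_in_GV: "i \<in> {1..N} \<Longrightarrow> Rv i \<in> GV N" by (auto simp: Rv_def GV_def)
lemma Bv_in_GV: "i \<in> {1..N} \<Longrightarrow> Bv N i \<in> GV N" by (auto simp: Bv_def GV_def)
lemma odd_vertex_Lv: "odd_vertex (Lv N i)" by (simp add: Lv_def odd_vertex_def)
lemma odd_vertex_Rv: "odd_vertex (Rv i)" by (simp add: Rv_def odd_vertex_def)
lemma even_vertex_Bv: "even_vertex (Bv N i)" by (simp add: Bv_def even_vertex_def)

lemma Lv_in_Lv_image_iff:
  "i \<in> {1..N} \<Longrightarrow> Lv N i \<in> Lv N ` {j \<in> {1..N}. P j} \<longleftrightarrow> P i"
  by (force simp: Lv_def)

lemma Rv_in_Rv_image_iff: "Rv i \<in> Rv ` J \<longleftrightarrow> i \<in> J"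
  by (force simp: Rv_def)

lemma Bv_in_Bv_image_iff: "Bv N i \<in> Bv N ` J \<longleftrightarrow> i \<in> J"
  by (force simp: Bv_def)

lemma Lv_notin_Rv_image: "i \<in> {1..N} \<Longrightarrow> J \<subseteq> {1..N} \<Longrightarrow> Lv N i \<notin> Rv ` J"
  by (force simp: Lv_def Rv_def)

lemma Rv_notin_Lv_image: "i \<in> {1..N} \<Longrightarrow> J \<subseteq> {1..N} \<Longrightarrow> Rv i \<notin> Lv N ` J"
  by (force simp: Lv_def Rv_def)

lemma odd_vertex_notin_Bv_image: "odd_vertex p \<Longrightarrow> p \<notin> Bv N ` J"
  using even_vertex_Bv even_vertex_iff_not_odd by blast

lemma Bv_notin_odd_image:
  "(\<And>j. odd_vertex (f j)) \<Longrightarrow> Bv N i \<notin> f ` J"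
  using even_vertex_Bv even_vertex_iff_not_odd by (metis imageE)

lemma letter_cases:
  assumes "is_word N u" "i \<in> {1..N}"
  shows "letter u i = 0 \<or> letter u i = 1"
proof -
  have "u ! (i - 1) \<in> set u" using assms by (auto simp: is_word_def)
  then show ?thesis using assms by (auto simp: is_word_def letter_def)
qed

lemma GoV_subset_GV: "GoV N u w \<subseteq> GV N" by (auto simp: GoV_def)
lemma GeV_subset_GV: "GeV N v w \<subseteq> GV N" by (auto simp: GeV_def)

lemma Lv_in_GoV_iff:
  assumes "is_word N u" "i \<in> {1..N}"
  shows "Lv N i \<in> GoV N u w \<longleftrightarrow> letter u i = 1"
  using letter_cases[OF assms] Lv_in_Lv_image_iff[OF assms(2)] Lv_in_GV[OF assms(2)]
    Lv_notin_Rv_image[OF assms(2)] odd_vertex_notin_Bv_image[OF odd_vertex_Lv]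
  unfolding GoV_def by auto

lemma Lv_notin_GeV: "i \<in> {1..N} \<Longrightarrow> Lv N i \<notin> GeV N v w"
  by (auto simp: GeV_def)

lemma Rv_notin_GoV: "i \<in> {1..N} \<Longrightarrow> Rv i \<notin> GoV N u w"
  by (auto simp: GoV_def)

lemma Rv_in_GeV_iff:
  assumes "is_word N v" "i \<in> {1..N}"
  shows "Rv i \<in> GeV N v w \<longleftrightarrow> letter v i = 0"
  using letter_cases[OF assms] assms(2) Rv_in_GV[OF assms(2)] Rv_notin_Lv_image[OF assms(2)]
    odd_vertex_notin_Bv_image[OF odd_vertex_Rv] Rv_in_Rv_image_iff
  unfolding GeV_def by auto

lemma Bv_in_GoV_iff:
  assumes "is_word N w" "i \<in> {1..N}"
  shows "Bv N i \<in> GoV N u w \<longleftrightarrow> letter w i = 1"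
  using letter_cases[OF assms] assms(2) Bv_in_GV[OF assms(2)] Bv_in_Bv_image_iff
    Bv_notin_odd_image[of "Rv"] Bv_notin_odd_image[of "Lv N"] odd_vertex_Rv odd_vertex_Lv
  unfolding GoV_def by auto

lemma Bv_in_GeV_iff:
  assumes "is_word N w" "i \<in> {1..N}"
  shows "Bv N i \<in> GeV N v w \<longleftrightarrow> letter w i = 0"
  using letter_cases[OF assms] assms(2) Bv_in_GV[OF assms(2)] Bv_in_Bv_image_iff
    Bv_notin_odd_image[of "Rv"] Bv_notin_odd_image[of "Lv N"] odd_vertex_Rv odd_vertex_Lv
  unfolding GeV_def by auto

lemma Lv_eq_iff: "i \<in> {1..N} \<Longrightarrow> j \<in> {1..N} \<Longrightarrow> Lv N i = Lv N j \<longleftrightarrow> i = j"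
  by (auto simp: Lv_def)

lemma Rv_eq_iff: "Rv i = Rv j \<longleftrightarrow> i = j"
  by (simp add: Rv_def)

lemma inner_vertex_in_GoV_GeV:
  "p \<in> GV N \<Longrightarrow> p \<notin> Lv N ` {1..N} \<union> Rv ` {1..N} \<union> Bv N ` {1..N}
    \<Longrightarrow> p \<in> GoV N u w \<and> p \<in> GeV N v w"
  unfolding GoV_def GeV_def by blast

lemma vertex_cases:
  assumes "p \<in> GV N"
  obtains (left) i where "i \<in> {1..N}" "p = Lv N i"
    | (right) i where "i \<in> {1..N}" "p = Rv i"
    | (bottom) i where "i \<in> {1..N}" "p = Bv N i"
    | (inner) "p \<notin> Lv N ` {1..N} \<union> Rv ` {1..N} \<union> Bv N ` {1..N}"
      "p \<in> GoV N u w" "p \<in> GeV N v w"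
  using assms unfolding GoV_def GeV_def by blast

section \<open>Perfect matchings via degrees\<close>

lemma deg_Un_disjoint:
  "finite A \<Longrightarrow> finite B \<Longrightarrow> A \<inter> B = {} \<Longrightarrow> deg (A \<union> B) p = deg A p + deg B p"
  unfolding deg_def by (subst card_Un_disjoint[symmetric]) (auto intro: arg_cong[where f = card])

lemma perfect_matching_iff_deg:
  "perfect_matching N W M \<longleftrightarrow> M \<subseteq> GE N \<and> (\<forall>p. deg M p = of_bool (p \<in> W))"
proof
  assume pm: "perfect_matching N W M"
  have sub: "M \<subseteq> GE N" and covered: "\<And>e. e \<in> M \<Longrightarrow> e \<subseteq> W"
    and unique: "\<And>p. p \<in> W \<Longrightarrow> \<exists>!e. e \<in> M \<and> p \<in> e"
    using pm unfolding perfect_matching_def induced_edges_def by blast+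
  have "deg M p = of_bool (p \<in> W)" for p
  proof (cases "p \<in> W")
    case True
    then obtain e where "e \<in> M" "p \<in> e" "\<forall>e'. e' \<in> M \<and> p \<in> e' \<longrightarrow> e' = e"
      using unique by blast
    then have "{e \<in> M. p \<in> e} = {e}" by blast
    then show ?thesis unfolding deg_def using True by simp
  next
    case False
    then have "{e \<in> M. p \<in> e} = {}" using covered by blast
    then show ?thesis unfolding deg_def using False by (simp only: card.empty of_bool_eq(1))
  qed
  with sub show "M \<subseteq> GE N \<and> (\<forall>p. deg M p = of_bool (p \<in> W))" by blast
next
  assume "M \<subseteq> GE N \<and> (\<forall>p. deg M p = of_bool (p \<in> W))"
  then have sub: "M \<subseteq> GE N" and deg: "\<And>p. card {e \<in> M. p \<in> e} = of_bool (p \<in> W)"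
    unfolding deg_def by blast+
  have fin: "finite M" using sub finite_GE finite_subset by blast
  have covered: "e \<subseteq> W" if "e \<in> M" for e
  proof
    fix p assume "p \<in> e"
    then have "card {e \<in> M. p \<in> e} \<noteq> 0" using that fin by auto
    then show "p \<in> W" using deg[of p] by (cases "p \<in> W") auto
  qed
  have "\<exists>!e. e \<in> M \<and> p \<in> e" if "p \<in> W" for p
  proof -
    have "card {e \<in> M. p \<in> e} = 1" using deg[of p] that by simp
    then obtain e where "{e \<in> M. p \<in> e} = {e}" by (rule card_1_singletonE)
    then have "e \<in> M \<and> p \<in> e" "\<And>e'. e' \<in> M \<and> p \<in> e' \<Longrightarrow> e' = e" by blast+
    then show ?thesis by (rule ex1I)
  qed
  then show "perfect_matching N W M"
    using sub covered unfolding perfect_matching_def induced_edges_def by blast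
qed

section \<open>Orientations of subgraphs of \<open>G\<^sup>N\<close>\<close>

definition oriented_subgraph :: "nat \<Rightarrow> (vert \<times> vert) set \<Rightarrow> bool" where
  "oriented_subgraph N D \<longleftrightarrow> (\<forall>a b. (a, b) \<in> D \<longrightarrow> {a, b} \<in> GE N \<and> (b, a) \<notin> D)"

lemma oriented_subgraph_arcD:
  assumes "oriented_subgraph N D" "(a, b) \<in> D"
  shows "{a, b} \<in> GE N" "(b, a) \<notin> D" "odd_vertex a \<longleftrightarrow> even_vertex b"
  using assms doubleton_in_GE(3) unfolding oriented_subgraph_def by blast+

lemma oriented_subgraph_finite:
  assumes "oriented_subgraph N D"
  shows "finite D"
proof -
  have "D \<subseteq> GV N \<times> GV N"
    using doubleton_in_GE(1,2) oriented_subgraph_arcD(1)[OF assms] by (intro subrelI) blast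
  then show ?thesis using finite_GV finite_subset by blast
qed

lemma doubleton_in_Mo_iff:
  assumes "oriented_subgraph N D"
  shows "{a, b} \<in> Mo D \<longleftrightarrow> (a, b) \<in> D \<and> odd_vertex a \<or> (b, a) \<in> D \<and> odd_vertex b"
proof
  assume "{a, b} \<in> Mo D"
  then obtain c d where "{a, b} = {c, d}" "(c, d) \<in> D" "odd_vertex c"
    unfolding Mo_def by blast
  then show "(a, b) \<in> D \<and> odd_vertex a \<or> (b, a) \<in> D \<and> odd_vertex b"
    unfolding doubleton_eq_iff by blast
next
  have "{a, b} \<in> Mo D" if "(a, b) \<in> D" "odd_vertex a" for a b
    using that oriented_subgraph_arcD(3)[OF assms that(1)] unfolding Mo_def by blast
  then show "(a, b) \<in> D \<and> odd_vertex a \<or> (b, a) \<in> D \<and> odd_vertex b \<Longrightarrow> {a, b} \<in> Mo D"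
    by (metis insert_commute)
qed

lemma doubleton_in_Me_iff:
  assumes "oriented_subgraph N D"
  shows "{a, b} \<in> Me D \<longleftrightarrow> (a, b) \<in> D \<and> even_vertex a \<or> (b, a) \<in> D \<and> even_vertex b"
proof
  assume "{a, b} \<in> Me D"
  then obtain c d where "{a, b} = {c, d}" "(c, d) \<in> D" "even_vertex c"
    unfolding Me_def by blast
  then show "(a, b) \<in> D \<and> even_vertex a \<or> (b, a) \<in> D \<and> even_vertex b"
    unfolding doubleton_eq_iff by blast
next
  have "{a, b} \<in> Me D" if "(a, b) \<in> D" "even_vertex a" for a b
    using that oriented_subgraph_arcD(3)[OF assms that(1)] even_vertex_iff_not_odd
    unfolding Me_def by blast
  then show "(a, b) \<in> D \<and> even_vertex a \<or> (b, a) \<in> D \<and> even_vertex b \<Longrightarrow> {a, b} \<in> Me D"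
    by (metis insert_commute)
qed

lemma Mo_subset_GE: "oriented_subgraph N D \<Longrightarrow> Mo D \<subseteq> GE N"
  unfolding Mo_def using oriented_subgraph_arcD(1) by blast

lemma Me_subset_GE: "oriented_subgraph N D \<Longrightarrow> Me D \<subseteq> GE N"
  unfolding Me_def using oriented_subgraph_arcD(1) by blast

lemma Mo_Me_disjoint:
  assumes "oriented_subgraph N D"
  shows "Mo D \<inter> Me D = {}"
proof -
  have "e \<notin> Me D" if "e \<in> Mo D" for e
  proof -
    obtain a b where "e = {a, b}" "(a, b) \<in> D" "odd_vertex a"
      using \<open>e \<in> Mo D\<close> unfolding Mo_def by blast
    then show ?thesis
      using doubleton_in_Me_iff[OF assms, of a b] oriented_subgraph_arcD[OF assms]
        even_vertex_iff_not_odd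
      by metis
  qed
  then show ?thesis by blast
qed

lemma Mo_Un_Me:
  assumes "oriented_subgraph N D"
  shows "Mo D \<union> Me D = und D"
proof
  show "Mo D \<union> Me D \<subseteq> und D" unfolding Mo_def Me_def und_def by blast
  show "und D \<subseteq> Mo D \<union> Me D"
  proof
    fix e assume "e \<in> und D"
    then obtain a b where "e = {a, b}" "(a, b) \<in> D" unfolding und_def by blast
    then show "e \<in> Mo D \<union> Me D"
      using doubleton_in_Mo_iff[OF assms] doubleton_in_Me_iff[OF assms] even_vertex_iff_not_odd
      by blast
  qed
qed

lemma deg_eq_card_neighbours:
  assumes "\<forall>e \<in> M. \<exists>a b. e = {a, b}"
  shows "deg M p = card {q. {p, q} \<in> M}"
proof -
  have "{e \<in> M. p \<in> e} = (\<lambda>q. {p, q}) ` {q. {p, q} \<in> M}"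
  proof (intro set_eqI iffI)
    fix e assume e: "e \<in> {e \<in> M. p \<in> e}"
    then obtain a b where "e = {a, b}" using assms by blast
    moreover have "p = a \<or> p = b" using e \<open>e = {a, b}\<close> by blast
    ultimately obtain q where "e = {p, q}" by (metis insert_commute)
    then show "e \<in> (\<lambda>q. {p, q}) ` {q. {p, q} \<in> M}" using e by blast
  qed auto
  moreover have "inj_on (\<lambda>q. {p, q}) Q" for Q
    by (auto simp: inj_on_def doubleton_eq_iff)
  ultimately show ?thesis by (simp add: deg_def card_image)
qed

lemma deg_Mo:
  assumes "oriented_subgraph N D"
  shows "deg (Mo D) p = (if odd_vertex p then outdeg D p else indeg D p)"
proof -
  have "{p, q} \<in> Mo D \<longleftrightarrow> (if odd_vertex p then (p, q) \<in> D else (q, p) \<in> D)" for q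
    using doubleton_in_Mo_iff[OF assms, of p q] oriented_subgraph_arcD(3)[OF assms, of p q]
      oriented_subgraph_arcD(3)[OF assms, of q p] even_vertex_iff_not_odd[of p]
      even_vertex_iff_not_odd[of q]
    by auto
  moreover have "\<forall>e \<in> Mo D. \<exists>a b. e = {a, b}" unfolding Mo_def by blast
  ultimately show ?thesis by (simp add: deg_eq_card_neighbours indeg_def outdeg_def)
qed

lemma deg_Me:
  assumes "oriented_subgraph N D"
  shows "deg (Me D) p = (if odd_vertex p then indeg D p else outdeg D p)"
proof -
  have "{p, q} \<in> Me D \<longleftrightarrow> (if odd_vertex p then (q, p) \<in> D else (p, q) \<in> D)" for q
    using doubleton_in_Me_iff[OF assms, of p q] oriented_subgraph_arcD(3)[OF assms, of p q]
      oriented_subgraph_arcD(3)[OF assms, of q p] even_vertex_iff_not_odd[of p]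
      even_vertex_iff_not_odd[of q]
    by auto
  moreover have "\<forall>e \<in> Me D. \<exists>a b. e = {a, b}" unfolding Me_def by blast
  ultimately show ?thesis by (simp add: deg_eq_card_neighbours indeg_def outdeg_def)
qed

lemma deg_und:
  assumes "oriented_subgraph N D"
  shows "deg (und D) p = indeg D p + outdeg D p"
proof -
  have "finite (Mo D)" "finite (Me D)"
    using Mo_subset_GE[OF assms] Me_subset_GE[OF assms] finite_GE finite_subset by blast+
  then have "deg (und D) p = deg (Mo D) p + deg (Me D) p"
    using Mo_Un_Me[OF assms] Mo_Me_disjoint[OF assms] deg_Un_disjoint by metis
  then show ?thesis by (simp add: deg_Mo[OF assms] deg_Me[OF assms])
qed

definition orient :: "edge set \<Rightarrow> edge set \<Rightarrow> (vert \<times> vert) set" where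
  "orient A B = {(a, b). {a, b} \<in> A \<and> odd_vertex a \<and> even_vertex b}
              \<union> {(a, b). {a, b} \<in> B \<and> even_vertex a \<and> odd_vertex b}"

lemma orient_Mo_Me:
  assumes "oriented_subgraph N D"
  shows "orient (Mo D) (Me D) = D"
  using doubleton_in_Mo_iff[OF assms] doubleton_in_Me_iff[OF assms]
    oriented_subgraph_arcD[OF assms] even_vertex_iff_not_odd
  unfolding orient_def by blast

lemma arc_in_orient_iff:
  "(a, b) \<in> orient A B \<longleftrightarrow>
    {a, b} \<in> A \<and> odd_vertex a \<and> even_vertex b \<or> {a, b} \<in> B \<and> even_vertex a \<and> odd_vertex b"
  by (simp add: orient_def)

lemma GE_oriented_cases:
  assumes "e \<in> GE N"
  obtains a b where "e = {a, b}" "odd_vertex a" "even_vertex b"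
proof -
  obtain a b where e: "e = {a, b}" using GE_doubleton[OF assms] by blast
  then have "odd_vertex a \<longleftrightarrow> even_vertex b" using assms doubleton_in_GE(3) by blast
  then show ?thesis
    using that e even_vertex_iff_not_odd by (metis insert_commute)
qed

lemma Mo_orient:
  assumes "A \<subseteq> GE N"
  shows "Mo (orient A B) = A"
proof
  show "Mo (orient A B) \<subseteq> A"
    unfolding Mo_def arc_in_orient_iff using even_vertex_iff_not_odd by blast
  show "A \<subseteq> Mo (orient A B)"
  proof
    fix e assume "e \<in> A"
    then obtain a b where "e = {a, b}" "odd_vertex a" "even_vertex b"
      using assms GE_oriented_cases by blast
    then show "e \<in> Mo (orient A B)"
      using \<open>e \<in> A\<close> arc_in_orient_iff unfolding Mo_def by blast
  qed
qed

lemma Me_orient: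
  assumes "B \<subseteq> GE N"
  shows "Me (orient A B) = B"
proof
  show "Me (orient A B) \<subseteq> B"
    unfolding Me_def arc_in_orient_iff using even_vertex_iff_not_odd by blast
  show "B \<subseteq> Me (orient A B)"
  proof
    fix e assume "e \<in> B"
    then obtain a b where "e = {b, a}" "odd_vertex a" "even_vertex b"
      using assms GE_oriented_cases by (metis insert_commute subsetD)
    then show "e \<in> Me (orient A B)"
      using \<open>e \<in> B\<close> arc_in_orient_iff unfolding Me_def by blast
  qed
qed

lemma oriented_subgraph_orient:
  assumes "A \<subseteq> GE N" "B \<subseteq> GE N" "A \<inter> B = {}"
  shows "oriented_subgraph N (orient A B)"
  using assms even_vertex_iff_not_odd unfolding oriented_subgraph_def orient_def
  by (auto simp: insert_commute)

lemma bij_betw_Mo_Me: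
  "bij_betw (\<lambda>D. (Mo D, Me D)) {D. oriented_subgraph N D}
     {(A, B). A \<subseteq> GE N \<and> B \<subseteq> GE N \<and> A \<inter> B = {}}"
proof (rule bij_betw_byWitness[where f' = "\<lambda>(A, B). orient A B"])
  show "\<forall>D \<in> {D. oriented_subgraph N D}. (\<lambda>(A, B). orient A B) (Mo D, Me D) = D"
    using orient_Mo_Me by simp
  show "\<forall>AB \<in> {(A, B). A \<subseteq> GE N \<and> B \<subseteq> GE N \<and> A \<inter> B = {}}.
      (\<lambda>D. (Mo D, Me D)) ((\<lambda>(A, B). orient A B) AB) = AB"
    using Mo_orient Me_orient by auto
  show "(\<lambda>D. (Mo D, Me D)) ` {D. oriented_subgraph N D}
      \<subseteq> {(A, B). A \<subseteq> GE N \<and> B \<subseteq> GE N \<and> A \<inter> B = {}}"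
    using Mo_subset_GE Me_subset_GE Mo_Me_disjoint by blast
  show "(\<lambda>(A, B). orient A B) ` {(A, B). A \<subseteq> GE N \<and> B \<subseteq> GE N \<and> A \<inter> B = {}}
      \<subseteq> {D. oriented_subgraph N D}"
    using oriented_subgraph_orient by auto
qed

section \<open>Digraphs with in-degree at most one\<close>

lemma finite_in_arcs: "finite D \<Longrightarrow> finite {q. (q, p) \<in> D}"
proof -
  have "{q. (q, p) \<in> D} \<subseteq> fst ` D" by force
  then show "finite D \<Longrightarrow> ?thesis" using finite_surj by blast
qed

lemma finite_out_arcs: "finite D \<Longrightarrow> finite {q. (p, q) \<in> D}"
proof -
  have "{q. (p, q) \<in> D} \<subseteq> snd ` D" by force
  then show "finite D \<Longrightarrow> ?thesis" using finite_surj by blast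
qed

lemma indeg_eq_0_iff: "finite D \<Longrightarrow> indeg D p = 0 \<longleftrightarrow> (\<forall>q. (q, p) \<notin> D)"
  unfolding indeg_def using finite_in_arcs by fastforce

lemma outdeg_eq_0_iff: "finite D \<Longrightarrow> outdeg D p = 0 \<longleftrightarrow> (\<forall>q. (p, q) \<notin> D)"
  unfolding outdeg_def using finite_out_arcs by fastforce

lemma arcs_into_unique:
  assumes "finite D" "indeg D b \<le> 1" "(a, b) \<in> D" "(a', b) \<in> D"
  shows "a = a'"
  using assms(2-4) finite_in_arcs[OF assms(1)] card_le_Suc0_iff_eq unfolding indeg_def by fastforce

lemma arcs_out_unique:
  assumes "finite D" "outdeg D a \<le> 1" "(a, b) \<in> D" "(a, b') \<in> D"
  shows "b = b'"
  using assms(2-4) finite_out_arcs[OF assms(1)] card_le_Suc0_iff_eq unfolding outdeg_def by fastforce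


text \<open>Walking an undirected path away from a source, every step must follow an arc forwards:
  a backward step would give its head a second incoming arc.\<close>

lemma rtrancl_symcl_from_source:
  assumes "(x, y) \<in> (D \<union> D\<inverse>)\<^sup>*"
    and source: "\<forall>z. (z, x) \<notin> D"
    and in_unique: "\<forall>a a' b. (a, b) \<in> D \<longrightarrow> (a', b) \<in> D \<longrightarrow> a = a'"
  shows "(x, y) \<in> D\<^sup>*"
  using assms(1)
proof (induction rule: rtrancl_induct)
  case base
  then show ?case by simp
next
  case (step y c)
  from step.hyps(2) consider "(y, c) \<in> D" | "(c, y) \<in> D" by blast
  then show ?case
  proof cases
    case 1
    with step.IH show ?thesis by (rule rtrancl_into_rtrancl)
  next
    case 2
    with source have "y \<noteq> x" by blast
    with step.IH obtain a where "(x, a) \<in> D\<^sup>*" "(a, y) \<in> D"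
      by (metis rtranclE)
    with 2 in_unique show ?thesis by blast
  qed
qed

lemma doubleton_in_und_iff: "{a, b} \<in> und D \<longleftrightarrow> (a, b) \<in> D \<or> (b, a) \<in> D"
  by (auto simp: und_def doubleton_eq_iff)

lemma joined_und_iff: "joined (und D) p q \<longleftrightarrow> (p, q) \<in> (D \<union> D\<inverse>)\<^sup>*"
proof -
  have "{(a, b). {a, b} \<in> und D} = D \<union> D\<inverse>"
    by (force simp: doubleton_in_und_iff)
  then show ?thesis by (simp add: joined_def)
qed

lemma und_converse: "und (D\<inverse>) = und D"
  by (auto simp: und_def insert_commute)

lemma sources_not_joined:
  assumes in_unique: "\<forall>a a' b. (a, b) \<in> D \<longrightarrow> (a', b) \<in> D \<longrightarrow> a = a'"
    and "\<forall>z. (z, x) \<notin> D" "\<forall>z. (z, y) \<notin> D" "x \<noteq> y"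
  shows "\<not> joined (und D) x y"
proof
  assume "joined (und D) x y"
  then have "(x, y) \<in> D\<^sup>*"
    using rtrancl_symcl_from_source[of x y D] assms(1,2) unfolding joined_und_iff by blast
  then show False using assms(3,4) by (metis rtranclE)
qed

lemma sinks_not_joined:
  assumes "\<forall>a b b'. (a, b) \<in> D \<longrightarrow> (a, b') \<in> D \<longrightarrow> b = b'"
    and "\<forall>z. (x, z) \<notin> D" "\<forall>z. (y, z) \<notin> D" "x \<noteq> y"
  shows "\<not> joined (und D) x y"
  using sources_not_joined[of "D\<inverse>" x y] assms unfolding und_converse by blast

section \<open>Oriented TFPLs and perfect matchings\<close>

lemma oriented_subgraph_of_oriented_TFPL: "is_oriented_TFPL N D \<Longrightarrow> oriented_subgraph N D"
  by (simp add: is_oriented_TFPL_def oriented_subgraph_def)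

lemma no_arcs_outside_GV:
  assumes "oriented_subgraph N D" "p \<notin> GV N"
  shows "indeg D p = 0" "outdeg D p = 0"
proof -
  have "(q, p) \<notin> D" "(p, q) \<notin> D" for q
    using assms oriented_subgraph_arcD(1) doubleton_in_GE(1,2) by metis+
  then show "indeg D p = 0" "outdeg D p = 0"
    by (simp_all add: indeg_eq_0_iff outdeg_eq_0_iff oriented_subgraph_finite[OF assms(1)])
qed

text \<open>An odd vertex of \<open>G\<^sup>N\<^sub>o(u,w)\<close> is left along its \<open>M\<^sub>o\<close>-edge and an even one is entered
  along it; for \<open>G\<^sup>N\<^sub>e(v,w)\<close> and \<open>M\<^sub>e\<close> the directions are reversed.\<close>

definition matching_degrees ::
    "nat \<Rightarrow> nat list \<Rightarrow> nat list \<Rightarrow> nat list \<Rightarrow> (vert \<times> vert) set \<Rightarrow> bool" where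
  "matching_degrees N u v w D \<longleftrightarrow> (\<forall>p.
     outdeg D p = of_bool (p \<in> (if odd_vertex p then GoV N u w else GeV N v w)) \<and>
     indeg D p = of_bool (p \<in> (if odd_vertex p then GeV N v w else GoV N u w)))"

lemma perfect_matchings_iff_matching_degrees:
  assumes "oriented_subgraph N D"
  shows "perfect_matching N (GoV N u w) (Mo D) \<and> perfect_matching N (GeV N v w) (Me D)
    \<longleftrightarrow> matching_degrees N u v w D"
  unfolding perfect_matching_iff_deg matching_degrees_def
  using Mo_subset_GE[OF assms] Me_subset_GE[OF assms] deg_Mo[OF assms] deg_Me[OF assms]
  by (auto split: if_splits)

lemma deg_und_of_matching_degrees:
  assumes "oriented_subgraph N D" "matching_degrees N u v w D"
  shows "deg (und D) p = of_bool (p \<in> GoV N u w) + of_bool (p \<in> GeV N v w)"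
  using assms(2) unfolding deg_und[OF assms(1)] matching_degrees_def
  by (cases "odd_vertex p") auto

lemma matching_degrees_of_oriented_TFPL:
  assumes u: "is_word N u" and v: "is_word N v" and w: "is_word N w"
    and O: "is_oriented_TFPL N D" and bd: "has_boundary N u v w D"
  shows "matching_degrees N u v w D"
  unfolding matching_degrees_def
proof
  fix p
  have S: "oriented_subgraph N D" using O by (rule oriented_subgraph_of_oriented_TFPL)
  have TF: "is_TFPL N (und D)"
    and deg2: "\<And>p. p \<in> GV N \<Longrightarrow> deg (und D) p = 2 \<Longrightarrow> indeg D p = 1 \<and> outdeg D p = 1"
    and LR: "\<And>i. i \<in> {1..N} \<Longrightarrow> indeg D (Lv N i) = 0 \<and> outdeg D (Rv i) = 0"
    using O unfolding is_oriented_TFPL_def by blast+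
  have boundary_deg: "\<And>i. i \<in> {1..N} \<Longrightarrow>
      deg (und D) (Lv N i) \<le> 1 \<and> deg (und D) (Rv i) \<le> 1 \<and> deg (und D) (Bv N i) = 1"
    and inner_deg: "\<And>p. p \<in> GV N \<Longrightarrow> p \<notin> Lv N ` {1..N} \<union> Rv ` {1..N} \<union> Bv N ` {1..N}
      \<Longrightarrow> deg (und D) p = 2"
    using TF unfolding is_TFPL_def by blast+
  note deg = deg_und[OF S]
  show "outdeg D p = of_bool (p \<in> (if odd_vertex p then GoV N u w else GeV N v w)) \<and>
      indeg D p = of_bool (p \<in> (if odd_vertex p then GeV N v w else GoV N u w))"
  proof (cases "p \<in> GV N")
    case False
    then have "p \<notin> GoV N u w" "p \<notin> GeV N v w" using GoV_subset_GV GeV_subset_GV by blast+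
    then show ?thesis using no_arcs_outside_GV[OF S False] by simp
  next
    case True
    then show ?thesis
    proof (cases rule: vertex_cases[where u = u and v = v and w = w])
      case (left i)
      have "letter u i = 1 \<longleftrightarrow> deg (und D) p = 1" using bd left by (simp add: has_boundary_def)
      then have "deg (und D) p = of_bool (letter u i = 1)"
        using boundary_deg[OF left(1)] left(2) by (cases "letter u i = 1") auto
      then show ?thesis
        using left LR[OF left(1)] deg[of p] odd_vertex_Lv Lv_in_GoV_iff[OF u] Lv_notin_GeV by simp
    next
      case (right i)
      have "letter v i = 0 \<longleftrightarrow> deg (und D) p = 1" using bd right by (simp add: has_boundary_def)
      then have "deg (und D) p = of_bool (letter v i = 0)"
        using boundary_deg[OF right(1)] right(2) by (cases "letter v i = 0") auto
      then show ?thesis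
        using right LR[OF right(1)] deg[of p] odd_vertex_Rv Rv_in_GeV_iff[OF v] Rv_notin_GoV by simp
    next
      case (bottom i)
      have "letter w i = 1 \<Longrightarrow> indeg D p = 1" "letter w i = 0 \<Longrightarrow> outdeg D p = 1"
        using bd bottom by (simp_all add: has_boundary_def)
      moreover have "indeg D p + outdeg D p = 1" using boundary_deg[OF bottom(1)] bottom(2) deg by simp
      ultimately show ?thesis
        using bottom letter_cases[OF w bottom(1)] even_vertex_Bv[of N i] even_vertex_iff_not_odd
          Bv_in_GoV_iff[OF w] Bv_in_GeV_iff[OF w] by auto
    next
      case inner
      then show ?thesis using deg2 inner_deg True by simp
    qed
  qed
qed

lemma arc_degrees_le_1:
  assumes "matching_degrees N u v w D"
  shows "indeg D p \<le> 1" "outdeg D p \<le> 1"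
  using assms unfolding matching_degrees_def by (metis of_bool_less_eq_one)+

lemma TFPL_of_matching_degrees:
  assumes w: "is_word N w" and S: "oriented_subgraph N D" and M: "matching_degrees N u v w D"
  shows "is_TFPL N (und D)"
proof -
  note deg = deg_und_of_matching_degrees[OF S M]
  have fin: "finite D" using S by (rule oriented_subgraph_finite)
  have source: "\<forall>q. (q, Lv N k) \<notin> D" and sink: "\<forall>q. (Rv k, q) \<notin> D" if "k \<in> {1..N}" for k
    using M that odd_vertex_Lv odd_vertex_Rv Lv_notin_GeV Rv_notin_GoV
    unfolding matching_degrees_def indeg_eq_0_iff[OF fin, symmetric]
      outdeg_eq_0_iff[OF fin, symmetric]
    by simp_all
  have in_unique: "\<forall>a a' b. (a, b) \<in> D \<longrightarrow> (a', b) \<in> D \<longrightarrow> a = a'"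
    using arcs_into_unique[OF fin arc_degrees_le_1(1)[OF M]] by blast
  have out_unique: "\<forall>a b b'. (a, b) \<in> D \<longrightarrow> (a, b') \<in> D \<longrightarrow> b = b'"
    using arcs_out_unique[OF fin arc_degrees_le_1(2)[OF M]] by blast
  show ?thesis
    unfolding is_TFPL_def
  proof (intro conjI ballI impI)
    show "und D \<subseteq> GE N" unfolding und_def using oriented_subgraph_arcD(1)[OF S] by blast
    fix i assume i: "i \<in> {1..N}"
    show "deg (und D) (Lv N i) \<le> 1" using deg Lv_notin_GeV[OF i] by simp
    show "deg (und D) (Rv i) \<le> 1" using deg Rv_notin_GoV[OF i] by simp
    show "deg (und D) (Bv N i) = 1"
      using deg letter_cases[OF w i] Bv_in_GoV_iff[OF w i] Bv_in_GeV_iff[OF w i] by auto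
  next
    fix p assume "p \<in> GV N" "p \<notin> Lv N ` {1..N} \<union> Rv ` {1..N} \<union> Bv N ` {1..N}"
    then show "deg (und D) p = 2" using deg inner_vertex_in_GoV_GeV by fastforce
  next
    fix i j assume i: "i \<in> {1..N}" and j: "j \<in> {1..N}" and "i \<noteq> j"
    then have "Lv N i \<noteq> Lv N j" "Rv i \<noteq> Rv j" using Lv_eq_iff Rv_eq_iff by simp_all
    then show "\<not> joined (und D) (Lv N i) (Lv N j)" "\<not> joined (und D) (Rv i) (Rv j)"
      using sources_not_joined[OF in_unique source[OF i] source[OF j]]
        sinks_not_joined[OF out_unique sink[OF i] sink[OF j]] by simp_all
  qed
qed

lemma oriented_TFPL_of_matching_degrees:
  assumes u: "is_word N u" and v: "is_word N v" and w: "is_word N w"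
    and S: "oriented_subgraph N D" and M: "matching_degrees N u v w D"
  shows "is_oriented_TFPL N D \<and> has_boundary N u v w D"
proof -
  note deg = deg_und_of_matching_degrees[OF S M]
  have degs: "outdeg D p = of_bool (p \<in> (if odd_vertex p then GoV N u w else GeV N v w))"
    "indeg D p = of_bool (p \<in> (if odd_vertex p then GeV N v w else GoV N u w))" for p
    using M unfolding matching_degrees_def by blast+
  have "indeg D p = 1 \<and> outdeg D p = 1" if "deg (und D) p = 2" for p
    using that deg_und[OF S, of p] arc_degrees_le_1[OF M, of p] by linarith
  moreover have "indeg D (Lv N i) = 0" "outdeg D (Rv i) = 0" if "i \<in> {1..N}" for i
    using degs odd_vertex_Lv odd_vertex_Rv Lv_notin_GeV[OF that] Rv_notin_GoV[OF that] by simp_all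
  ultimately have "is_oriented_TFPL N D"
    using S TFPL_of_matching_degrees[OF w S M]
    unfolding is_oriented_TFPL_def oriented_subgraph_def by blast
  moreover have "has_boundary N u v w D"
    unfolding has_boundary_def
  proof (intro ballI conjI impI)
    fix i assume i: "i \<in> {1..N}"
    show "letter u i = 1 \<longleftrightarrow> deg (und D) (Lv N i) = 1"
      using deg Lv_in_GoV_iff[OF u i] Lv_notin_GeV[OF i] by simp
    show "letter v i = 0 \<longleftrightarrow> deg (und D) (Rv i) = 1"
      using deg Rv_in_GeV_iff[OF v i] Rv_notin_GoV[OF i] by simp
    show "indeg D (Bv N i) = 1" if "letter w i = 1"
      using that degs even_vertex_Bv[of N i] even_vertex_iff_not_odd Bv_in_GoV_iff[OF w i] by simp
    show "outdeg D (Bv N i) = 1" if "letter w i = 0"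
      using that degs even_vertex_Bv[of N i] even_vertex_iff_not_odd Bv_in_GeV_iff[OF w i] by simp
  qed
  ultimately show ?thesis by blast
qed

theorem theorem3p3:
  fixes N :: nat and u v w :: "nat list"
  assumes "N \<ge> 1" and "is_word N u" and "is_word N v" and "is_word N w"
  shows "bij_betw (\<lambda>D. (Mo D, Me D))
           {D. is_oriented_TFPL N D \<and> has_boundary N u v w D}
           {(A, B). perfect_matching N (GoV N u w) A \<and> perfect_matching N (GeV N v w) B
                    \<and> A \<inter> B = {}}"
proof -
  have "is_oriented_TFPL N D \<and> has_boundary N u v w D \<longleftrightarrow>
      perfect_matching N (GoV N u w) (Mo D) \<and> perfect_matching N (GeV N v w) (Me D)"
    if "oriented_subgraph N D" for D
    using that assms(2-4) perfect_matchings_iff_matching_degrees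
      matching_degrees_of_oriented_TFPL oriented_TFPL_of_matching_degrees by blast
  then have "bij_betw (\<lambda>D. (Mo D, Me D))
      {D \<in> {D. oriented_subgraph N D}. is_oriented_TFPL N D \<and> has_boundary N u v w D}
      {AB \<in> {(A, B). A \<subseteq> GE N \<and> B \<subseteq> GE N \<and> A \<inter> B = {}}.
        perfect_matching N (GoV N u w) (fst AB) \<and> perfect_matching N (GeV N v w) (snd AB)}"
    by (intro bij_betw_Collect[OF bij_betw_Mo_Me]) auto
  moreover have "{D \<in> {D. oriented_subgraph N D}. is_oriented_TFPL N D \<and> has_boundary N u v w D}
      = {D. is_oriented_TFPL N D \<and> has_boundary N u v w D}"
    using oriented_subgraph_of_oriented_TFPL by blast
  moreover have "{AB \<in> {(A, B). A \<subseteq> GE N \<and> B \<subseteq> GE N \<and> A \<inter> B = {}}.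
        perfect_matching N (GoV N u w) (fst AB) \<and> perfect_matching N (GeV N v w) (snd AB)}
      = {(A, B). perfect_matching N (GoV N u w) A \<and> perfect_matching N (GeV N v w) B
           \<and> A \<inter> B = {}}"
    by (auto simp: perfect_matching_iff_deg)
  ultimately show ?thesis by simp
qed

end
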